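(* Let $0<p\leq 1$, $0\leq\omega\leq 1$, and $A\in\mathbb{R}^{m\times N}$ with $N=nd$ (block size $d$). Let $x\in\mathbb{R}^N$ be block $k$-sparse with block support $T_0$. Let $\tilde T\subset\{1,\dots,n\}$ be an arbitrary set and define $\rho,\alpha\geq0$ by $|\tilde T|=\rho k$ and $|\tilde T\cap T_0|=\alpha\rho k$. Let $s=(1+\rho-2\alpha\rho)k$ and $\gamma=\omega+(1-\omega)(s/k)^{1-p/2}$. Suppose there exists an integer $a$ with $a\geq(1-\alpha)\rho$ and $a>1$ such that $$\delta_{ak}+\frac{a^{1-p/2}}{\gamma}\delta_{(a+1)k}<\frac{a^{1-p/2}}{\gamma}-1 .$$ Then $\tilde T\in\Gamma_s(T_0)$, and $A$ satisfies the $\omega$-$d$-$p$-NSP$(k,s,C)$ for some constant $C<1$.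
   Context: Vectors $x\in\mathbb{R}^N$, $N=nd$, are split into $n$ consecutive blocks of length $d$: $x[i]=(x_{(i-1)d+1},\dots,x_{id})^T$. For $p>0$, $\lVert x\rVert_{2,p}^p=\sum_{i=1}^n\lVert x[i]\rVert_2^p$; for $v\in\mathbb{R}^m$, $\lVert v\rVert_p^p=\sum_{i=1}^m|v_i|^p$. Block $k$-sparse means at most $k$ nonzero blocks; the block support is $\{i: x[i]\neq 0\}$. For $T\subset\{1,\dots,n\}$, $h_T$ equals $h$ on the blocks indexed by $T$ and zero elsewhere, and $T^c=\{1,\dots,n\}\setminus T$. The block $p$-restricted isometry constant $\delta_k$ of $A$ is the smallest positive number such that $(1-\delta_k)\lVert z\rVert_2^p\leq\lVert Az\rVert_p^p\leq(1+\delta_k)\lVert z\rVert_2^p$ for all block $k$-sparse $z$. For $V\subset\{1,\dots,n\}$, $\Gamma_s(V)=\{U\subset\{1,\dots,n\}: |(V\cap U^c)\cup(V^c\cap U)|\leq s\}$. $A$ satisfies $\omega$-$d$-$p$-NSP$(k,s,C)$ if for every $h$ with $Ah=0$, every $T$ with $|T|\leq k$ and every $S$ with $|S|\leq s$: $\omega\lVert h_T\rVert_{2,p}^p+(1-\omega)\lVert h_S\rVert_{2,p}^p\leq C\lVert h_{T^c}\rVert_{2,p}^p$. *)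

theory Defs
  imports Complex_Main
begin

text \<open>Conventions: vectors in R^N are functions nat => real vanishing at indices >= N
  (coordinates 0..N-1); blocks are indexed 0..n-1, block i consisting of the
  coordinates i*d .. i*d+d-1.  An m x N matrix is a function nat => nat => real
  of which only entries (i,j) with i < m, j < N are used.\<close>

definition in_Rn :: "nat \<Rightarrow> (nat \<Rightarrow> real) \<Rightarrow> bool" where
  "in_Rn N z \<longleftrightarrow> (\<forall>j\<ge>N. z j = 0)"

definition mat_vec :: "nat \<Rightarrow> nat \<Rightarrow> (nat \<Rightarrow> nat \<Rightarrow> real) \<Rightarrow> (nat \<Rightarrow> real) \<Rightarrow> nat \<Rightarrow> real" where
  "mat_vec m N A z = (\<lambda>i. if i < m then (\<Sum>j<N. A i j * z j) else 0)"

definition blk_norm :: "nat \<Rightarrow> (nat \<Rightarrow> real) \<Rightarrow> nat \<Rightarrow> real" where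
  "blk_norm d x i = sqrt (\<Sum>j<d. (x (i * d + j))\<^sup>2)"

definition mixed_norm_p :: "nat \<Rightarrow> nat \<Rightarrow> real \<Rightarrow> (nat \<Rightarrow> real) \<Rightarrow> real" where
  "mixed_norm_p n d p x = (\<Sum>i<n. blk_norm d x i powr p)"

definition lp_norm_p :: "nat \<Rightarrow> real \<Rightarrow> (nat \<Rightarrow> real) \<Rightarrow> real" where
  "lp_norm_p m p v = (\<Sum>i<m. \<bar>v i\<bar> powr p)"

definition l2_norm :: "nat \<Rightarrow> (nat \<Rightarrow> real) \<Rightarrow> real" where
  "l2_norm N z = sqrt (\<Sum>j<N. (z j)\<^sup>2)"

definition block_supp :: "nat \<Rightarrow> nat \<Rightarrow> (nat \<Rightarrow> real) \<Rightarrow> nat set" where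
  "block_supp n d x = {i. i < n \<and> (\<exists>j<d. x (i * d + j) \<noteq> 0)}"

definition block_sparse :: "nat \<Rightarrow> nat \<Rightarrow> nat \<Rightarrow> (nat \<Rightarrow> real) \<Rightarrow> bool" where
  "block_sparse n d k x \<longleftrightarrow> in_Rn (n * d) x \<and> card (block_supp n d x) \<le> k"

definition blk_restrict :: "nat \<Rightarrow> nat set \<Rightarrow> (nat \<Rightarrow> real) \<Rightarrow> nat \<Rightarrow> real" where
  "blk_restrict d T h = (\<lambda>j. if j div d \<in> T then h j else 0)"

definition block_p_RIC :: "nat \<Rightarrow> nat \<Rightarrow> nat \<Rightarrow> real \<Rightarrow> (nat \<Rightarrow> nat \<Rightarrow> real) \<Rightarrow> nat \<Rightarrow> real" where
  "block_p_RIC m n d p A k = Inf {\<delta>. 0 < \<delta> \<and>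
     (\<forall>z. block_sparse n d k z \<longrightarrow>
        (1 - \<delta>) * l2_norm (n * d) z powr p \<le> lp_norm_p m p (mat_vec m (n * d) A z) \<and>
        lp_norm_p m p (mat_vec m (n * d) A z) \<le> (1 + \<delta>) * l2_norm (n * d) z powr p)}"

definition Gamma_s :: "nat \<Rightarrow> real \<Rightarrow> nat set \<Rightarrow> nat set set" where
  "Gamma_s n s V = {U. U \<subseteq> {..<n} \<and> real (card ((V \<inter> ({..<n} - U)) \<union> (({..<n} - V) \<inter> U))) \<le> s}"

definition weighted_NSP :: "nat \<Rightarrow> nat \<Rightarrow> nat \<Rightarrow> real \<Rightarrow> real \<Rightarrow> (nat \<Rightarrow> nat \<Rightarrow> real)
    \<Rightarrow> nat \<Rightarrow> real \<Rightarrow> real \<Rightarrow> bool" where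
  "weighted_NSP m n d p \<omega> A k s C \<longleftrightarrow>
     (\<forall>h T S. in_Rn (n * d) h \<and> (\<forall>i<m. mat_vec m (n * d) A h i = 0) \<and>
        T \<subseteq> {..<n} \<and> card T \<le> k \<and> S \<subseteq> {..<n} \<and> real (card S) \<le> s \<longrightarrow>
        \<omega> * mixed_norm_p n d p (blk_restrict d T h)
          + (1 - \<omega>) * mixed_norm_p n d p (blk_restrict d S h)
        \<le> C * mixed_norm_p n d p (blk_restrict d ({..<n} - T) h))"

end

theory Submission
  imports Defs "HOL-Analysis.Analysis"
begin

text \<open>
  Let h lie in the kernel of A and enumerate its blocks by decreasing norm.  The k + K
  largest blocks form h_0; the remaining ones are cut into consecutive groups h_1, h_2, ...
  of K blocks each.  Since A h_0 = - (sum_j A h_j) and t |-> |t|^p is subadditive for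
  p <= 1, the block RIP gives (1 - delta_(k+K)) ||h_0||_2^p <= (1 + delta_K) sum_j ||h_j||_2^p.
  Every block of h_j is dominated by every block of h_(j-1), so
  ||h_j||_2^p <= K^(p/2-1) ||h_(j-1)||_(2,p)^p, and the right-hand side is at most
  (1 + delta_K) K^(p/2-1) ||h_(T^c)||_(2,p)^p, because the blocks outside the k largest carry
  no more mass than those outside T.  Conversely, by Hoelder's inequality a set of
  r <= k + K blocks has ||h_X||_(2,p)^p <= r^(1-p/2) ||h_0||_2^p; this is applied to T and S.
  With K = a k the resulting constant is (1 + delta_(ak)) gamma / ((1 - delta_((a+1)k)) a^(1-p/2)),
  which is below 1 exactly under the hypothesis on the restricted isometry constants.
\<close>

lemma sum_powr_le_card_powr_sum:
  fixes y :: "'a \<Rightarrow> real"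
  assumes fin: "finite P" and nonneg: "\<And>i. i \<in> P \<Longrightarrow> 0 \<le> y i" and q: "0 < q" "q \<le> 1"
  shows "(\<Sum>i\<in>P. y i powr q) \<le> real (card P) powr (1 - q) * (\<Sum>i\<in>P. y i) powr q"
proof (cases "(\<Sum>i\<in>P. y i) = 0")
  case True
  then have "\<forall>i\<in>P. y i = 0" using sum_nonneg_eq_0_iff[OF fin] nonneg by blast
  then show ?thesis by simp
next
  case False
  define r where "r = real (card P)"
  define c where "c = (\<Sum>i\<in>P. y i) / r"
  have "P \<noteq> {}" using False by auto
  then have r: "r > 0" using fin by (simp add: r_def card_gt_0_iff)
  have c: "c > 0" using False r nonneg by (simp add: c_def order_less_le sum_nonneg)
  \<comment> \<open>Young's inequality against the mean value \<open>c\<close>\<close>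
  have young: "y i powr q * c powr (1 - q) \<le> q * y i + (1 - q) * c" if "i \<in> P" for i
    using Youngs_inequality_0[of q "1 - q" "y i" c] q c nonneg[OF that]
    by (cases "y i = 0") auto
  have "(\<Sum>i\<in>P. y i powr q) * c powr (1 - q) \<le> (\<Sum>i\<in>P. q * y i + (1 - q) * c)"
    unfolding sum_distrib_right by (rule sum_mono) (rule young)
  also have "\<dots> = q * (\<Sum>i\<in>P. y i) + (1 - q) * c * r"
    by (simp add: sum.distrib sum_distrib_left r_def)
  also have "\<dots> = r * c"
    using r by (simp add: c_def field_simps)
  also have "\<dots> = r powr (1 - q) * (r * c) powr q * c powr (1 - q)"
    using r c by (simp add: powr_mult mult_ac flip: powr_add)
  also have "r * c = (\<Sum>i\<in>P. y i)"
    using r by (simp add: c_def)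
  finally show ?thesis using c by (simp add: r_def)
qed

lemma add_powr_le:
  fixes a b p :: real
  assumes "0 \<le> a" "0 \<le> b" "0 < p" "p \<le> 1"
  shows "(a + b) powr p \<le> a powr p + b powr p"
proof (cases "a + b = 0")
  case False
  then have ab: "a + b > 0" using assms by simp
  \<comment> \<open>both fractions lie in \<open>[0,1]\<close>, where \<open>t \<le> t powr p\<close>\<close>
  have "1 = a / (a + b) + b / (a + b)"
    using ab by (simp add: add_divide_distrib[symmetric])
  also have "\<dots> \<le> (a / (a + b)) powr p + (b / (a + b)) powr p"
    using powr_mono'[of p 1 "a / (a + b)"] powr_mono'[of p 1 "b / (a + b)"] assms ab
    by (intro add_mono) auto
  also have "\<dots> = (a powr p + b powr p) / (a + b) powr p"
    using ab assms by (simp add: powr_divide add_divide_distrib)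
  finally have "1 \<le> (a powr p + b powr p) / (a + b) powr p" .
  then show ?thesis using ab by (simp add: le_divide_eq)
qed (use assms in simp)

lemma abs_sum_powr_le:
  fixes f :: "'a \<Rightarrow> real"
  assumes "0 < p" "p \<le> 1"
  shows "\<bar>\<Sum>j\<in>J. f j\<bar> powr p \<le> (\<Sum>j\<in>J. \<bar>f j\<bar> powr p)"
proof (induction J rule: infinite_finite_induct)
  case (insert j J)
  have "\<bar>\<Sum>i\<in>insert j J. f i\<bar> powr p \<le> (\<bar>f j\<bar> + \<bar>\<Sum>i\<in>J. f i\<bar>) powr p"
    using insert assms by (intro powr_mono2) auto
  also have "\<dots> \<le> \<bar>f j\<bar> powr p + \<bar>\<Sum>i\<in>J. f i\<bar> powr p"
    using assms by (intro add_powr_le) auto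
  finally show ?case using insert by simp
qed simp_all

lemma power2_powr_half:
  fixes x :: real
  assumes "0 \<le> x"
  shows "(x\<^sup>2) powr (p / 2) = x powr p"
proof -
  have "x\<^sup>2 = x powr 2" using assms by (simp add: powr_realpow')
  then show ?thesis by (simp add: powr_powr)
qed

lemma sum_le_sum_lessThan_card:
  fixes e :: "nat \<Rightarrow> real"
  assumes decr: "\<And>i j. i \<le> j \<Longrightarrow> j < n \<Longrightarrow> e j \<le> e i" and P: "P \<subseteq> {..<n}"
  shows "(\<Sum>i\<in>P. e i) \<le> (\<Sum>i<card P. e i)"
proof -
  define r where "r = card P"
  have fin: "finite P" using P finite_subset by blast
  have "r \<le> n" using card_mono[OF _ P] by (simp add: r_def)
  \<comment> \<open>exchange the elements of \<open>P\<close> beyond \<open>r\<close> against the missing ones below \<open>r\<close>\<close>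
  define X where "X = P - {..<r}"
  define Y where "Y = {..<r} - P"
  have "card P = card (P \<inter> {..<r}) + card X" "r = card ({..<r} \<inter> P) + card Y"
    using card_Int_Diff[OF fin, of "{..<r}"] card_Int_Diff[of "{..<r}" P]
    by (simp_all add: X_def Y_def)
  then have card_XY: "card X = card Y" by (simp add: r_def Int_commute)
  have "(\<Sum>i\<in>X. e i) \<le> (\<Sum>i\<in>Y. e i)"
  proof (cases "r = 0")
    case True then show ?thesis using fin by (simp add: X_def Y_def r_def)
  next
    case False
    have "(\<Sum>i\<in>X. e i) \<le> (\<Sum>i\<in>X. e (r - 1))"
      by (rule sum_mono) (use P in \<open>auto simp: X_def intro!: decr\<close>)
    also have "\<dots> = (\<Sum>i\<in>Y. e (r - 1))" using card_XY by simp
    also have "\<dots> \<le> (\<Sum>i\<in>Y. e i)"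
      by (rule sum_mono) (use \<open>r \<le> n\<close> False in \<open>auto simp: Y_def intro!: decr\<close>)
    finally show ?thesis .
  qed
  moreover have "(\<Sum>i\<in>P. e i) = (\<Sum>i\<in>P \<inter> {..<r}. e i) + (\<Sum>i\<in>X. e i)"
    unfolding X_def using fin by (rule sum.Int_Diff)
  moreover have "(\<Sum>i<r. e i) = (\<Sum>i\<in>{..<r} \<inter> P. e i) + (\<Sum>i\<in>Y. e i)"
    unfolding Y_def by (rule sum.Int_Diff) simp
  ultimately show ?thesis by (simp add: r_def Int_commute)
qed

lemma sum_square_powr_le_sum_powr:
  fixes u :: "'a \<Rightarrow> real"
  assumes "finite B" "card B \<le> K" "card I = K" "0 < p"
    and nonneg: "\<And>i. i \<in> B \<Longrightarrow> 0 \<le> u i"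
    and below: "\<And>i j. i \<in> B \<Longrightarrow> j \<in> I \<Longrightarrow> u i \<le> u j"
  shows "(\<Sum>i\<in>B. (u i)\<^sup>2) powr (p / 2) \<le> real K powr (p / 2 - 1) * (\<Sum>j\<in>I. u j powr p)"
proof (cases "B = {}")
  case False
  define c where "c = Max (u ` B)"
  have "c \<in> u ` B" using False assms(1) by (simp add: c_def)
  then have c: "0 \<le> c" "\<And>j. j \<in> I \<Longrightarrow> c \<le> u j" using nonneg below by auto
  have "0 < K" using False assms(1,2) card_gt_0_iff by fastforce
  have "(\<Sum>i\<in>B. (u i)\<^sup>2) \<le> (\<Sum>i\<in>B. c\<^sup>2)"
    using assms(1) nonneg by (intro sum_mono power_mono) (auto simp: c_def)
  also have "\<dots> \<le> real K * c\<^sup>2"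
    using assms(2) by (simp add: mult_right_mono)
  finally have "(\<Sum>i\<in>B. (u i)\<^sup>2) powr (p / 2) \<le> (real K * c\<^sup>2) powr (p / 2)"
    using assms(4) by (intro powr_mono2) (auto intro: sum_nonneg)
  also have "\<dots> = real K powr (p / 2 - 1) * (real K * c powr p)"
    using \<open>0 < K\<close> c(1) by (simp add: powr_mult power2_powr_half powr_diff)
  also have "real K * c powr p = (\<Sum>j\<in>I. c powr p)"
    using assms(3) by simp
  also have "\<dots> \<le> (\<Sum>j\<in>I. u j powr p)"
    using c assms(4) by (intro sum_mono powr_mono2) auto
  finally show ?thesis by (simp add: mult_left_mono)
qed (simp add: sum_nonneg)

lemma sum_block_squares_powr_le:
  fixes u :: "nat \<Rightarrow> real"
  assumes decr: "\<And>i j. i \<le> j \<Longrightarrow> u j \<le> u i" and nonneg: "\<And>i. 0 \<le> u i"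
    and "0 < K" "0 < p"
  shows "(\<Sum>j<J. (\<Sum>i\<in>{k + Suc j * K..<k + Suc j * K + K}. (u i)\<^sup>2) powr (p / 2))
         \<le> real K powr (p / 2 - 1) * (\<Sum>i\<in>{k..<k + J * K}. u i powr p)"
proof -
  have "(\<Sum>j<J. (\<Sum>i\<in>{k + Suc j * K..<k + Suc j * K + K}. (u i)\<^sup>2) powr (p / 2))
        \<le> (\<Sum>j<J. real K powr (p / 2 - 1) * (\<Sum>i\<in>{j * K..<j * K + K}. u (k + i) powr p))"
  proof (rule sum_mono)
    fix j
    have "(\<Sum>i\<in>{k + Suc j * K..<k + Suc j * K + K}. (u i)\<^sup>2) powr (p / 2)
          \<le> real K powr (p / 2 - 1) * (\<Sum>i\<in>{k + j * K..<k + j * K + K}. u i powr p)"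
      using assms by (intro sum_square_powr_le_sum_powr) (auto intro!: decr)
    also have "(\<Sum>i\<in>{k + j * K..<k + j * K + K}. u i powr p) = (\<Sum>i\<in>{j * K..<j * K + K}. u (k + i) powr p)"
      using sum.shift_bounds_nat_ivl[of "\<lambda>i. u i powr p" "j * K" k "j * K + K"] by (simp add: ac_simps)
    finally show "(\<Sum>i\<in>{k + Suc j * K..<k + Suc j * K + K}. (u i)\<^sup>2) powr (p / 2)
          \<le> real K powr (p / 2 - 1) * (\<Sum>i\<in>{j * K..<j * K + K}. u (k + i) powr p)" .
  qed
  also have "\<dots> = real K powr (p / 2 - 1) * (\<Sum>i<J * K. u (k + i) powr p)"
    by (simp add: sum_distrib_left[symmetric] sum.nat_group)
  also have "(\<Sum>i<J * K. u (k + i) powr p) = (\<Sum>i\<in>{k..<k + J * K}. u i powr p)"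
    using sum.shift_bounds_nat_ivl[of "\<lambda>i. u i powr p" 0 k "J * K"]
    by (simp add: atLeast0LessThan add.commute)
  finally show ?thesis .
qed

lemma div_eq_iff_mem_block:
  fixes t c K :: nat
  assumes "0 < K"
  shows "t div K = c \<longleftrightarrow> t \<in> {c * K..<c * K + K}"
proof
  assume "t div K = c"
  then show "t \<in> {c * K..<c * K + K}"
    using div_mult_mod_eq[of t K] mod_less_divisor[OF assms, of t] by auto
next
  assume "t \<in> {c * K..<c * K + K}"
  then show "t div K = c" by (intro div_nat_eqI) (auto simp: mult.commute)
qed

lemma sum_lessThan_mult_eq_sum_blocks:
  fixes f :: "nat \<Rightarrow> real"
  shows "(\<Sum>j<n * d. f j) = (\<Sum>i<n. \<Sum>j<d. f (i * d + j))"
proof -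
  have "(\<Sum>j\<in>{i * d..<i * d + d}. f j) = (\<Sum>j<d. f (i * d + j))" for i
    using sum.shift_bounds_nat_ivl[of f 0 "i * d" d] by (simp add: atLeast0LessThan ac_simps)
  then show ?thesis by (simp flip: sum.nat_group)
qed

lemma blk_norm_nonneg: "0 \<le> blk_norm d h i"
  by (simp add: blk_norm_def sum_nonneg)

lemma blk_norm_blk_restrict:
  "blk_norm d (blk_restrict d X h) i = (if i \<in> X then blk_norm d h i else 0)"
proof -
  have "(i * d + j) div d = i" if "j < d" for j using that by simp
  then show ?thesis by (auto simp: blk_norm_def blk_restrict_def)
qed

lemma mixed_norm_p_blk_restrict:
  "mixed_norm_p n d p (blk_restrict d X h) = (\<Sum>i\<in>X \<inter> {..<n}. blk_norm d h i powr p)"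
  unfolding mixed_norm_p_def blk_norm_blk_restrict Int_commute[of X]
  by (auto simp: sum.inter_restrict intro!: sum.cong)

lemma l2_norm_powr_blk_restrict:
  "l2_norm (n * d) (blk_restrict d X h) powr p
     = (\<Sum>i\<in>X \<inter> {..<n}. (blk_norm d h i)\<^sup>2) powr (p / 2)"
proof -
  have "(\<Sum>j<n * d. (blk_restrict d X h j)\<^sup>2) = (\<Sum>i<n. (blk_norm d (blk_restrict d X h) i)\<^sup>2)"
    by (simp add: sum_lessThan_mult_eq_sum_blocks blk_norm_def sum_nonneg)
  also have "\<dots> = (\<Sum>i\<in>X \<inter> {..<n}. (blk_norm d h i)\<^sup>2)"
    unfolding blk_norm_blk_restrict Int_commute[of X]
    by (auto simp: sum.inter_restrict intro!: sum.cong)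
  finally show ?thesis
    by (simp add: l2_norm_def powr_half_sqrt[symmetric] powr_powr sum_nonneg)
qed

lemma block_sparse_blk_restrict:
  assumes "X \<subseteq> {..<n}" "card X \<le> K" "in_Rn (n * d) h"
  shows "block_sparse n d K (blk_restrict d X h)"
proof -
  have "block_supp n d (blk_restrict d X h) \<subseteq> X"
    by (auto simp: block_supp_def blk_restrict_def split: if_splits)
  then have "card (block_supp n d (blk_restrict d X h)) \<le> card X"
    using assms(1) by (meson card_mono finite_lessThan finite_subset)
  with assms show ?thesis
    by (simp add: block_sparse_def in_Rn_def blk_restrict_def)
qed

lemma lp_norm_p_nonneg: "0 \<le> lp_norm_p m p v"
  by (simp add: lp_norm_p_def sum_nonneg)

lemma lp_norm_p_mat_vec_le:
  assumes "0 \<le> p"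
  shows "lp_norm_p m p (mat_vec m N A z)
         \<le> (\<Sum>i<m. (\<Sum>j<N. \<bar>A i j\<bar>) powr p) * l2_norm N z powr p"
proof -
  have coord: "\<bar>z j\<bar> \<le> l2_norm N z" if "j < N" for j
  proof -
    have "(z j)\<^sup>2 \<le> (\<Sum>i<N. (z i)\<^sup>2)"
      using that by (intro member_le_sum) auto
    then show ?thesis unfolding l2_norm_def using real_sqrt_le_mono by fastforce
  qed
  have "\<bar>mat_vec m N A z i\<bar> \<le> (\<Sum>j<N. \<bar>A i j\<bar>) * l2_norm N z" if "i < m" for i
  proof -
    have "\<bar>mat_vec m N A z i\<bar> \<le> (\<Sum>j<N. \<bar>A i j\<bar> * \<bar>z j\<bar>)"
      using that by (simp add: mat_vec_def sum_abs flip: abs_mult)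
    also have "\<dots> \<le> (\<Sum>j<N. \<bar>A i j\<bar> * l2_norm N z)"
      by (intro sum_mono mult_left_mono coord) auto
    finally show ?thesis by (simp add: sum_distrib_right)
  qed
  then have "lp_norm_p m p (mat_vec m N A z) \<le> (\<Sum>i<m. ((\<Sum>j<N. \<bar>A i j\<bar>) * l2_norm N z) powr p)"
    unfolding lp_norm_p_def using assms by (intro sum_mono powr_mono2) auto
  also have "\<dots> = (\<Sum>i<m. (\<Sum>j<N. \<bar>A i j\<bar>) powr p * l2_norm N z powr p)"
    by (simp add: powr_mult sum_nonneg l2_norm_def)
  finally show ?thesis by (simp add: sum_distrib_right)
qed

lemma two_sided_bound_Inf:
  fixes L Y :: real
  assumes "D \<noteq> {}" "bdd_below D" "0 \<le> L"
    and bound: "\<And>\<delta>. \<delta> \<in> D \<Longrightarrow> (1 - \<delta>) * L \<le> Y \<and> Y \<le> (1 + \<delta>) * L"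
  shows "(1 - Inf D) * L \<le> Y \<and> Y \<le> (1 + Inf D) * L"
proof (cases "L = 0")
  case True
  then show ?thesis using bound \<open>D \<noteq> {}\<close> by fastforce
next
  case False
  then have "L > 0" using assms(3) by simp
  have "\<bar>Y / L - 1\<bar> \<le> Inf D"
    using \<open>D \<noteq> {}\<close> bound \<open>L > 0\<close> by (intro cInf_greatest) (auto simp: field_simps abs_le_iff)
  then show ?thesis using \<open>L > 0\<close> by (simp add: field_simps abs_le_iff)
qed

lemma
  fixes p :: real
  assumes "0 < p"
  shows block_p_RIC_nonneg: "0 \<le> block_p_RIC m n d p A K"
    and block_p_RIC_bounds: "block_sparse n d K z \<Longrightarrow>
      (1 - block_p_RIC m n d p A K) * l2_norm (n * d) z powr p \<le> lp_norm_p m p (mat_vec m (n * d) A z)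
      \<and> lp_norm_p m p (mat_vec m (n * d) A z) \<le> (1 + block_p_RIC m n d p A K) * l2_norm (n * d) z powr p"
proof -
  let ?N = "n * d"
  define D where "D = {\<delta>. 0 < \<delta> \<and> (\<forall>z. block_sparse n d K z \<longrightarrow>
     (1 - \<delta>) * l2_norm ?N z powr p \<le> lp_norm_p m p (mat_vec m ?N A z) \<and>
     lp_norm_p m p (mat_vec m ?N A z) \<le> (1 + \<delta>) * l2_norm ?N z powr p)}"
  have RIC: "block_p_RIC m n d p A K = Inf D" by (simp add: block_p_RIC_def D_def)
  define M where "M = (\<Sum>i<m. (\<Sum>j<?N. \<bar>A i j\<bar>) powr p)"
  have "0 \<le> M" by (simp add: M_def sum_nonneg)
  have "M + 1 \<in> D"
  proof -
    have "(1 - (M + 1)) * l2_norm ?N z powr p \<le> lp_norm_p m p (mat_vec m ?N A z)" for z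
      using \<open>0 \<le> M\<close> lp_norm_p_nonneg[of m p]
      by (meson order_trans mult_nonpos_nonneg powr_ge_zero diff_le_0_iff_le le_add_same_cancel2)
    moreover have "lp_norm_p m p (mat_vec m ?N A z) \<le> (1 + (M + 1)) * l2_norm ?N z powr p" for z
      using lp_norm_p_mat_vec_le[of p m ?N A z] \<open>0 < p\<close> unfolding M_def[symmetric]
      by (smt (verit) mult_right_mono powr_ge_zero)
    ultimately show ?thesis using \<open>0 \<le> M\<close> by (simp add: D_def)
  qed
  then have "D \<noteq> {}" "bdd_below D" by (auto simp: D_def intro: bdd_belowI[of _ 0])
  show "0 \<le> block_p_RIC m n d p A K"
    unfolding RIC using \<open>D \<noteq> {}\<close> by (intro cInf_greatest) (auto simp: D_def)
  assume "block_sparse n d K z"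
  then show "(1 - block_p_RIC m n d p A K) * l2_norm ?N z powr p \<le> lp_norm_p m p (mat_vec m ?N A z)
      \<and> lp_norm_p m p (mat_vec m ?N A z) \<le> (1 + block_p_RIC m n d p A K) * l2_norm ?N z powr p"
    unfolding RIC using \<open>D \<noteq> {}\<close> \<open>bdd_below D\<close>
    by (intro two_sided_bound_Inf) (auto simp: D_def)
qed

lemma mat_vec_sum:
  assumes "\<And>x. x < N \<Longrightarrow> z x = (\<Sum>j\<in>J. f j x)"
  shows "mat_vec m N A z i = (\<Sum>j\<in>J. mat_vec m N A (f j) i)"
proof -
  have "(\<Sum>x<N. A i x * z x) = (\<Sum>j\<in>J. \<Sum>x<N. A i x * f j x)"
    using assms by (simp add: sum_distrib_left sum.swap[of _ J])
  then show ?thesis by (simp add: mat_vec_def)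
qed

lemma lp_norm_p_sum_le:
  assumes "0 < p" "p \<le> 1"
  shows "lp_norm_p m p (\<lambda>i. \<Sum>j\<in>J. g j i) \<le> (\<Sum>j\<in>J. lp_norm_p m p (g j))"
proof -
  have "lp_norm_p m p (\<lambda>i. \<Sum>j\<in>J. g j i) \<le> (\<Sum>i<m. \<Sum>j\<in>J. \<bar>g j i\<bar> powr p)"
    unfolding lp_norm_p_def using assms by (intro sum_mono abs_sum_powr_le)
  also have "\<dots> = (\<Sum>j\<in>J. lp_norm_p m p (g j))"
    unfolding lp_norm_p_def by (rule sum.swap)
  finally show ?thesis .
qed

lemma kernel_head_le_sum_parts:
  fixes H :: "nat \<Rightarrow> nat set"
  assumes p: "0 < p" "p \<le> 1"
    and h: "in_Rn (n * d) h" "\<forall>i<m. mat_vec m (n * d) A h i = 0"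
    and H0: "H0 \<subseteq> {..<n}" "card H0 \<le> K0"
    and H: "finite J" "\<And>j. j \<in> J \<Longrightarrow> H j \<subseteq> {..<n}" "\<And>j. j \<in> J \<Longrightarrow> card (H j) \<le> K"
    and disj: "disjoint_family_on H J" "\<And>j. j \<in> J \<Longrightarrow> H0 \<inter> H j = {}"
    and cover: "{..<n} \<subseteq> H0 \<union> (\<Union>j\<in>J. H j)"
  shows "(1 - block_p_RIC m n d p A K0) * l2_norm (n * d) (blk_restrict d H0 h) powr p
         \<le> (1 + block_p_RIC m n d p A K) * (\<Sum>j\<in>J. l2_norm (n * d) (blk_restrict d (H j) h) powr p)"
proof -
  let ?N = "n * d" and ?A = "mat_vec m (n * d) A"
  let ?h0 = "blk_restrict d H0 h" and ?hj = "\<lambda>j. blk_restrict d (H j) h"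
  have decomp: "h x = ?h0 x + (\<Sum>j\<in>J. ?hj j x)" if "x < ?N" for x
  proof -
    have "x div d < n"
      using that by (cases "d = 0") (auto simp: div_less_iff_less_mult mult.commute)
    then consider "x div d \<in> H0" | j0 where "j0 \<in> J" "x div d \<in> H j0" using cover by blast
    then show ?thesis
    proof cases
      case 1
      then show ?thesis using disj(2) by (fastforce simp: blk_restrict_def intro!: sum.neutral)
    next
      case 2
      then have "x div d \<in> H j \<longleftrightarrow> j = j0" if "j \<in> J" for j
        using disj(1) that by (auto simp: disjoint_family_on_def)
      then have "(\<Sum>j\<in>J. ?hj j x) = (\<Sum>j\<in>J. if j = j0 then h x else 0)"
        by (intro sum.cong) (auto simp: blk_restrict_def)
      then show ?thesis using 2 disj(2) H(1) by (auto simp: blk_restrict_def)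
    qed
  qed
  have kernel: "\<bar>?A ?h0 i\<bar> = \<bar>\<Sum>j\<in>J. ?A (?hj j) i\<bar>" if "i < m" for i
  proof -
    \<comment> \<open>\<open>None\<close> indexes \<open>h\<^sub>0\<close>, \<open>Some j\<close> indexes \<open>h\<^sub>j\<close>\<close>
    have "?A h i = ?A ?h0 i + (\<Sum>j\<in>J. ?A (?hj j) i)"
      using mat_vec_sum[where J = "insert None (Some ` J)" and z = h and N = ?N and m = m
          and f = "\<lambda>j. case j of None \<Rightarrow> ?h0 | Some j \<Rightarrow> ?hj j"] decomp H(1)
      by (simp add: sum.reindex)
    then show ?thesis using h(2) that by simp
  qed
  have "(1 - block_p_RIC m n d p A K0) * l2_norm ?N ?h0 powr p \<le> lp_norm_p m p (?A ?h0)"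
    using block_p_RIC_bounds[OF p(1) block_sparse_blk_restrict[OF H0 h(1)]] by blast
  also have "\<dots> = lp_norm_p m p (\<lambda>i. \<Sum>j\<in>J. ?A (?hj j) i)"
    unfolding lp_norm_p_def using kernel by simp
  also have "\<dots> \<le> (\<Sum>j\<in>J. lp_norm_p m p (?A (?hj j)))"
    using p by (rule lp_norm_p_sum_le)
  also have "\<dots> \<le> (\<Sum>j\<in>J. (1 + block_p_RIC m n d p A K) * l2_norm ?N (?hj j) powr p)"
    using block_p_RIC_bounds[OF p(1) block_sparse_blk_restrict[OF H(2,3) h(1)]]
    by (intro sum_mono) blast
  finally show ?thesis by (simp add: sum_distrib_left)
qed

lemma obtain_decreasing_enumeration:
  fixes w :: "nat \<Rightarrow> real"
  obtains \<sigma> where "bij_betw \<sigma> {..<n} {..<n}" "\<And>i j. i \<le> j \<Longrightarrow> j < n \<Longrightarrow> w (\<sigma> j) \<le> w (\<sigma> i)"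
proof -
  define l where "l = sort_key (\<lambda>b. - w b) [0..<n]"
  have "mset l = mset [0..<n]" by (simp add: l_def)
  then have "distinct l" "set l = {..<n}" "length l = n"
    by (metis distinct_upt mset_eq_imp_distinct_iff, metis atLeast_upt set_mset_mset,
        metis length_upt minus_nat.diff_0 size_mset)
  moreover have "sorted (map (\<lambda>b. - w b) l)" by (simp add: l_def)
  ultimately show ?thesis
    using that[of "(!) l"] bij_betw_nth sorted_nth_mono by fastforce
qed

locale sorted_blocks =
  fixes n d :: nat and h :: "nat \<Rightarrow> real" and \<sigma> :: "nat \<Rightarrow> nat"
  assumes bij: "bij_betw \<sigma> {..<n} {..<n}"
    and sorted: "\<And>i j. i \<le> j \<Longrightarrow> j < n \<Longrightarrow> blk_norm d h (\<sigma> j) \<le> blk_norm d h (\<sigma> i)"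
begin

text \<open>Padding by zeros lets sums of \<open>sorted_norm\<close> run over index ranges beyond \<open>n\<close>.\<close>

definition sorted_norm :: "nat \<Rightarrow> real" where
  "sorted_norm i = (if i < n then blk_norm d h (\<sigma> i) else 0)"

lemma sorted_norm_nonneg: "0 \<le> sorted_norm i"
  by (simp add: sorted_norm_def blk_norm_nonneg)

lemma sorted_norm_decreasing: "i \<le> j \<Longrightarrow> sorted_norm j \<le> sorted_norm i"
  by (simp add: sorted_norm_def sorted blk_norm_nonneg)

lemma inj_on_\<sigma>: "inj_on \<sigma> {..<n}"
  using bij by (rule bij_betw_imp_inj_on)

lemma sum_\<sigma>_image:
  "P \<subseteq> {..<n} \<Longrightarrow> (\<Sum>b\<in>\<sigma> ` P. f b) = (\<Sum>i\<in>P. f (\<sigma> i))"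
  using inj_on_\<sigma> by (intro sum.reindex_cong[where l = \<sigma>]) (auto intro: inj_on_subset)

lemma mixed_norm_p_image:
  assumes "P \<subseteq> {..<n}"
  shows "mixed_norm_p n d p (blk_restrict d (\<sigma> ` P) h) = (\<Sum>i\<in>P. sorted_norm i powr p)"
proof -
  have "\<sigma> ` P \<subseteq> {..<n}" using assms bij by (auto simp: bij_betw_def)
  then show ?thesis using assms
    by (auto simp: mixed_norm_p_blk_restrict sum_\<sigma>_image Int_absorb2 sorted_norm_def intro!: sum.cong)
qed

lemma l2_norm_powr_image:
  assumes "finite P"
  shows "l2_norm (n * d) (blk_restrict d (\<sigma> ` (P \<inter> {..<n})) h) powr p
         = (\<Sum>i\<in>P. (sorted_norm i)\<^sup>2) powr (p / 2)"
proof -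
  have "\<sigma> ` (P \<inter> {..<n}) \<subseteq> {..<n}" using bij by (auto simp: bij_betw_def)
  then have "l2_norm (n * d) (blk_restrict d (\<sigma> ` (P \<inter> {..<n})) h) powr p
      = (\<Sum>i\<in>P \<inter> {..<n}. (sorted_norm i)\<^sup>2) powr (p / 2)"
    by (auto simp: l2_norm_powr_blk_restrict sum_\<sigma>_image Int_absorb2 sorted_norm_def intro!: sum.cong)
  also have "(\<Sum>i\<in>P \<inter> {..<n}. (sorted_norm i)\<^sup>2) = (\<Sum>i\<in>P. (sorted_norm i)\<^sup>2)"
    using assms by (intro sum.mono_neutral_left) (auto simp: sorted_norm_def)
  finally show ?thesis .
qed

lemma mixed_norm_p_le_sum_top:
  assumes X: "X \<subseteq> {..<n}" and "0 \<le> p"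
  shows "mixed_norm_p n d p (blk_restrict d X h) \<le> (\<Sum>i<card X. sorted_norm i powr p)"
proof -
  define Q where "Q = {i. i < n \<and> \<sigma> i \<in> X}"
  have Q: "Q \<subseteq> {..<n}" "\<sigma> ` Q = X" using X bij by (auto simp: Q_def bij_betw_def)
  then have "card Q = card X"
    using card_image[OF inj_on_subset[OF inj_on_\<sigma> Q(1)]] by simp
  moreover have "(\<Sum>i\<in>Q. sorted_norm i powr p) \<le> (\<Sum>i<card Q. sorted_norm i powr p)"
    using sorted_norm_decreasing sorted_norm_nonneg \<open>0 \<le> p\<close> Q(1)
    by (intro sum_le_sum_lessThan_card[where n = n]) (auto intro: powr_mono2)
  ultimately show ?thesis using mixed_norm_p_image[OF Q(1), of p] Q(2) by simp
qed

lemma mixed_norm_p_le_head: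
  assumes "X \<subseteq> {..<n}" "card X \<le> N" "real (card X) \<le> r" "0 < p" "p \<le> 2"
  shows "mixed_norm_p n d p (blk_restrict d X h)
         \<le> r powr (1 - p / 2) * (\<Sum>i<N. (sorted_norm i)\<^sup>2) powr (p / 2)"
proof -
  have "mixed_norm_p n d p (blk_restrict d X h) \<le> (\<Sum>i<card X. ((sorted_norm i)\<^sup>2) powr (p / 2))"
    using mixed_norm_p_le_sum_top[of X p] assms by (simp add: power2_powr_half sorted_norm_nonneg)
  also have "\<dots> \<le> real (card X) powr (1 - p / 2) * (\<Sum>i<card X. (sorted_norm i)\<^sup>2) powr (p / 2)"
    using sum_powr_le_card_powr_sum[of "{..<card X}" "\<lambda>i. (sorted_norm i)\<^sup>2" "p / 2"] assms
    by simp
  also have "\<dots> \<le> r powr (1 - p / 2) * (\<Sum>i<N. (sorted_norm i)\<^sup>2) powr (p / 2)"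
    using assms by (intro mult_mono powr_mono2 sum_mono2) (auto intro: sum_nonneg)
  finally show ?thesis .
qed

lemma sum_tail_le_mixed_norm_p_compl:
  assumes "T \<subseteq> {..<n}" "card T \<le> k" "0 \<le> p"
  shows "(\<Sum>i\<in>{k..<n}. sorted_norm i powr p) \<le> mixed_norm_p n d p (blk_restrict d ({..<n} - T) h)"
proof -
  have "\<sigma> ` {..<n} = {..<n}" using bij by (simp add: bij_betw_def)
  then have "mixed_norm_p n d p (blk_restrict d ({..<n} - T) h)
      = (\<Sum>i<n. sorted_norm i powr p) - mixed_norm_p n d p (blk_restrict d T h)"
    using mixed_norm_p_image[of "{..<n}" p] assms(1)
    by (simp add: mixed_norm_p_blk_restrict sum_diff Int_absorb2 Diff_subset Int_absorb1)
  moreover have "mixed_norm_p n d p (blk_restrict d T h) \<le> (\<Sum>i<k. sorted_norm i powr p)"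
    using mixed_norm_p_le_sum_top[OF assms(1,3)] assms(2)
    by (meson finite_lessThan lessThan_subset_iff order_trans powr_ge_zero sum_mono2)
  moreover have "(\<Sum>i<n. sorted_norm i powr p) = (\<Sum>i<k. sorted_norm i powr p) + (\<Sum>i\<in>{k..<n}. sorted_norm i powr p)"
  proof (cases "k \<le> n")
    case True
    then show ?thesis
      using sum.atLeastLessThan_concat[of 0 k n "\<lambda>i. sorted_norm i powr p"] by (simp add: atLeast0LessThan)
  next
    case False
    then have "(\<Sum>i\<in>{n..<k}. sorted_norm i powr p) = 0" by (simp add: sorted_norm_def)
    then show ?thesis
      using sum.atLeastLessThan_concat[of 0 n k "\<lambda>i. sorted_norm i powr p"] False
      by (simp add: atLeast0LessThan)
  qed
  ultimately show ?thesis by linarith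
qed

lemma kernel_head_le_sorted_groups:
  assumes p: "0 < p" "p \<le> 1" and "0 < K"
    and h: "in_Rn (n * d) h" "\<forall>i<m. mat_vec m (n * d) A h i = 0"
  shows "(1 - block_p_RIC m n d p A (k + K)) * (\<Sum>i<k + K. (sorted_norm i)\<^sup>2) powr (p / 2)
         \<le> (1 + block_p_RIC m n d p A K)
            * (\<Sum>j<n. (\<Sum>i\<in>{k + Suc j * K..<k + Suc j * K + K}. (sorted_norm i)\<^sup>2) powr (p / 2))"
proof -
  define P where "P j = {k + Suc j * K..<k + Suc j * K + K}" for j
  have P_iff: "i \<in> P j \<longleftrightarrow> k + K \<le> i \<and> (i - k) div K = Suc j" for i j
    using div_eq_iff_mem_block[OF \<open>0 < K\<close>, of "i - k" "Suc j"] by (auto simp: P_def)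
  define H0 where "H0 = \<sigma> ` ({..<k + K} \<inter> {..<n})"
  define H where "H j = \<sigma> ` (P j \<inter> {..<n})" for j
  have img: "\<sigma> ` (S \<inter> {..<n}) \<subseteq> {..<n}" for S
    using bij by (auto simp: bij_betw_def)
  have card_img: "card (\<sigma> ` (S \<inter> {..<n})) \<le> card S" if "finite S" for S
    using that by (meson card_image_le card_mono finite_Int inf_le1 order_trans)
  have "(1 - block_p_RIC m n d p A (k + K)) * l2_norm (n * d) (blk_restrict d H0 h) powr p
        \<le> (1 + block_p_RIC m n d p A K) * (\<Sum>j<n. l2_norm (n * d) (blk_restrict d (H j) h) powr p)"
  proof (rule kernel_head_le_sum_parts[OF p h])
    show "H0 \<subseteq> {..<n}" "H j \<subseteq> {..<n}" for j using img by (auto simp: H0_def H_def)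
    show "card H0 \<le> k + K" using card_img[of "{..<k + K}"] by (simp add: H0_def)
    show "card (H j) \<le> K" for j using card_img[of "P j"] by (simp add: H_def P_def)
    show "disjoint_family_on H {..<n}"
      unfolding disjoint_family_on_def
      by (auto simp: H_def inj_on_image_Int[OF inj_on_\<sigma>, symmetric] P_iff)
    show "H0 \<inter> H j = {}" for j
      by (auto simp: H0_def H_def inj_on_image_Int[OF inj_on_\<sigma>, symmetric] P_iff)
    show "{..<n} \<subseteq> H0 \<union> (\<Union>j<n. H j)"
    proof
      fix b assume "b \<in> {..<n}"
      then obtain i where i: "i < n" "b = \<sigma> i" using bij by (auto simp: bij_betw_def)
      show "b \<in> H0 \<union> (\<Union>j<n. H j)"
      proof (cases "i < k + K")
        case False
        then have "0 < (i - k) div K" using \<open>0 < K\<close> by (simp add: div_greater_zero_iff)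
        moreover have "(i - k) div K \<le> n" using i(1) div_le_dividend[of "i - k" K] by linarith
        ultimately have "i \<in> P ((i - k) div K - 1)" "(i - k) div K - 1 < n"
          using False by (auto simp: P_iff)
        then show ?thesis using i by (auto simp: H_def)
      qed (use i in \<open>auto simp: H0_def\<close>)
    qed
  qed simp_all
  moreover have "l2_norm (n * d) (blk_restrict d (H j) h) powr p
      = (\<Sum>i\<in>P j. (sorted_norm i)\<^sup>2) powr (p / 2)" for j
    unfolding H_def by (rule l2_norm_powr_image) (simp add: P_def)
  ultimately show ?thesis by (simp add: H0_def l2_norm_powr_image P_def)
qed

lemma head_le_tail_in_kernel:
  assumes p: "0 < p" "p \<le> 1" and "0 < K"
    and h: "in_Rn (n * d) h" "\<forall>i<m. mat_vec m (n * d) A h i = 0"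
  shows "(1 - block_p_RIC m n d p A (k + K)) * (\<Sum>i<k + K. (sorted_norm i)\<^sup>2) powr (p / 2)
         \<le> (1 + block_p_RIC m n d p A K) * real K powr (p / 2 - 1)
            * (\<Sum>i\<in>{k..<n}. sorted_norm i powr p)"
proof -
  have "(\<Sum>j<n. (\<Sum>i\<in>{k + Suc j * K..<k + Suc j * K + K}. (sorted_norm i)\<^sup>2) powr (p / 2))
        \<le> real K powr (p / 2 - 1) * (\<Sum>i\<in>{k..<k + n * K}. sorted_norm i powr p)"
    using sorted_norm_decreasing sorted_norm_nonneg \<open>0 < K\<close> p(1)
    by (rule sum_block_squares_powr_le)
  also have "(\<Sum>i\<in>{k..<k + n * K}. sorted_norm i powr p) = (\<Sum>i\<in>{k..<n}. sorted_norm i powr p)"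
  proof -
    have "n \<le> k + n * K" using \<open>0 < K\<close> by (simp add: trans_le_add2)
    then show ?thesis by (intro sum.mono_neutral_right) (auto simp: sorted_norm_def)
  qed
  finally have "(1 + block_p_RIC m n d p A K)
        * (\<Sum>j<n. (\<Sum>i\<in>{k + Suc j * K..<k + Suc j * K + K}. (sorted_norm i)\<^sup>2) powr (p / 2))
      \<le> (1 + block_p_RIC m n d p A K) * (real K powr (p / 2 - 1) * (\<Sum>i\<in>{k..<n}. sorted_norm i powr p))"
    using block_p_RIC_nonneg[OF p(1), of m n d A K] by (intro mult_left_mono) auto
  with kernel_head_le_sorted_groups[OF assms, where k = k] show ?thesis
    by (simp add: mult.assoc)
qed

end

lemma weighted_NSP_of_block_RIC:
  fixes s :: real
  assumes p: "0 < p" "p \<le> 1" and \<omega>: "0 \<le> \<omega>" "\<omega> \<le> 1" and "0 < K"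
    and RIC: "block_p_RIC m n d p A (k + K) < 1"
    and s: "0 \<le> s" "s \<le> real (k + K)"
  shows "weighted_NSP m n d p \<omega> A k s
           ((\<omega> * real k powr (1 - p / 2) + (1 - \<omega>) * s powr (1 - p / 2))
            * ((1 + block_p_RIC m n d p A K) / (1 - block_p_RIC m n d p A (k + K)))
            * real K powr (p / 2 - 1))"
  unfolding weighted_NSP_def
proof (intro allI impI, elim conjE)
  fix h T S
  assume h: "in_Rn (n * d) h" "\<forall>i<m. mat_vec m (n * d) A h i = 0"
    and T: "T \<subseteq> {..<n}" "card T \<le> k" and S: "S \<subseteq> {..<n}" "real (card S) \<le> s"
  obtain \<sigma> where "sorted_blocks n d h \<sigma>"
    using obtain_decreasing_enumeration[of n "blk_norm d h"] sorted_blocks.intro by metis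
  then interpret sorted_blocks n d h \<sigma> .
  let ?norm = "\<lambda>X. mixed_norm_p n d p (blk_restrict d X h)"
  define V where "V = (\<Sum>i<k + K. (sorted_norm i)\<^sup>2) powr (p / 2)"
  define Z where "Z = (1 + block_p_RIC m n d p A K) / (1 - block_p_RIC m n d p A (k + K)) * real K powr (p / 2 - 1)"
  have head_T: "?norm T \<le> real k powr (1 - p / 2) * V"
    using mixed_norm_p_le_head[OF T(1), of "k + K" "real k"] T(2) p by (simp add: V_def)
  have "card S \<le> k + K" using S(2) s(2) by (metis of_nat_le_iff order_trans)
  then have head_S: "?norm S \<le> s powr (1 - p / 2) * V"
    using mixed_norm_p_le_head[OF S(1) _ S(2)] p by (simp add: V_def)
  let ?c = "(1 + block_p_RIC m n d p A K) * real K powr (p / 2 - 1)"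
  have "(1 - block_p_RIC m n d p A (k + K)) * V \<le> ?c * (\<Sum>i\<in>{k..<n}. sorted_norm i powr p)"
    unfolding V_def by (rule head_le_tail_in_kernel[OF p \<open>0 < K\<close> h])
  also have "\<dots> \<le> ?c * ?norm ({..<n} - T)"
    using sum_tail_le_mixed_norm_p_compl[OF T] p(1) block_p_RIC_nonneg[OF p(1), of m n d A K]
    by (intro mult_left_mono) auto
  finally have "V \<le> ?c * ?norm ({..<n} - T) / (1 - block_p_RIC m n d p A (k + K))"
    using RIC by (simp add: pos_le_divide_eq mult.commute)
  then have tail: "V \<le> Z * ?norm ({..<n} - T)"
    by (simp add: Z_def)
  have "\<omega> * ?norm T + (1 - \<omega>) * ?norm S
        \<le> (\<omega> * real k powr (1 - p / 2) + (1 - \<omega>) * s powr (1 - p / 2)) * V"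
    using head_T head_S \<omega> by (simp add: distrib_right mult.assoc add_mono mult_left_mono)
  also have "\<dots> \<le> (\<omega> * real k powr (1 - p / 2) + (1 - \<omega>) * s powr (1 - p / 2)) * (Z * ?norm ({..<n} - T))"
    using tail \<omega> by (intro mult_left_mono) auto
  finally show "\<omega> * ?norm T + (1 - \<omega>) * ?norm S
      \<le> (\<omega> * real k powr (1 - p / 2) + (1 - \<omega>) * s powr (1 - p / 2))
         * ((1 + block_p_RIC m n d p A K) / (1 - block_p_RIC m n d p A (k + K)))
         * real K powr (p / 2 - 1) * ?norm ({..<n} - T)"
    by (simp add: Z_def mult_ac)
qed

lemma mem_Gamma_s_iff_card:
  assumes "U \<subseteq> {..<n}" "V \<subseteq> {..<n}"
  shows "U \<in> Gamma_s n s V \<longleftrightarrow> real (card V) + real (card U) - 2 * real (card (U \<inter> V)) \<le> s"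
proof -
  have fin: "finite U" "finite V" using assms finite_subset by blast+
  have "(V \<inter> ({..<n} - U)) \<union> (({..<n} - V) \<inter> U) = (V - U) \<union> (U - V)"
    using assms by auto
  moreover have "card ((V - U) \<union> (U - V)) = card (V - U) + card (U - V)"
    using fin by (intro card_Un_disjoint) auto
  moreover have "card (V - U) = card V - card (U \<inter> V)" "card (U - V) = card U - card (U \<inter> V)"
    using fin by (simp_all add: card_Diff_subset_Int Int_commute)
  moreover have "card (U \<inter> V) \<le> card V" "card (U \<inter> V) \<le> card U"
    using fin by (simp_all add: card_mono)
  ultimately show ?thesis using assms by (simp add: Gamma_s_def of_nat_diff)
qed

lemma weighted_NSP_zero_sparsity: "weighted_NSP m n d p \<omega> A 0 0 0"
  by (auto simp: weighted_NSP_def mixed_norm_p_blk_restrict finite_subset)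

lemma RIC_condition_constant_lt_one:
  fixes \<delta>1 \<delta>2 b \<gamma> :: real
  assumes "0 \<le> \<delta>1" "0 \<le> \<gamma>" "0 < b" and cond: "\<delta>1 + b / \<gamma> * \<delta>2 < b / \<gamma> - 1"
  shows "\<delta>2 < 1" and "(1 + \<delta>1) / (1 - \<delta>2) * \<gamma> / b < 1"
proof -
  have main: "1 + \<delta>1 < b / \<gamma> * (1 - \<delta>2)" using cond by (simp add: right_diff_distrib)
  then have "\<gamma> \<noteq> 0" using \<open>0 \<le> \<delta>1\<close> by auto
  then have "0 < \<gamma>" "0 < b / \<gamma>" using assms(2,3) by simp_all
  then show "\<delta>2 < 1" using main \<open>0 \<le> \<delta>1\<close> by (smt (verit) mult_nonneg_nonpos)
  with main \<open>0 < \<gamma>\<close> show "(1 + \<delta>1) / (1 - \<delta>2) * \<gamma> / b < 1"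
    using assms(3) by (simp add: field_simps)
qed

lemma exists_weighted_NSP_lt_one:
  fixes \<sigma> p \<omega> :: real and a k :: nat
  defines "q \<equiv> 1 - p / 2"
  defines "\<gamma> \<equiv> \<omega> + (1 - \<omega>) * \<sigma> powr q"
  assumes p: "0 < p" "p \<le> 1" and \<omega>: "0 \<le> \<omega>" "\<omega> \<le> 1" and "0 < k" "0 < a"
    and \<sigma>: "0 \<le> \<sigma>" "\<sigma> * real k \<le> real (k + a * k)"
    and cond: "block_p_RIC m n d p A (a * k) + real a powr q / \<gamma> * block_p_RIC m n d p A (k + a * k)
               < real a powr q / \<gamma> - 1"
  shows "\<exists>C < 1. weighted_NSP m n d p \<omega> A k (\<sigma> * real k) C"
proof -
  let ?s = "\<sigma> * real k"
  define \<delta>1 where "\<delta>1 = block_p_RIC m n d p A (a * k)"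
  define \<delta>2 where "\<delta>2 = block_p_RIC m n d p A (k + a * k)"
  have "0 \<le> \<delta>1" "0 \<le> \<gamma>" "0 < real a powr q"
    using block_p_RIC_nonneg[OF p(1)] \<omega> \<open>0 < a\<close> by (simp_all add: \<delta>1_def \<gamma>_def)
  from RIC_condition_constant_lt_one[OF this cond[folded \<delta>1_def \<delta>2_def]]
  have "\<delta>2 < 1" and C: "(1 + \<delta>1) / (1 - \<delta>2) * \<gamma> / real a powr q < 1" .
  have "weighted_NSP m n d p \<omega> A k ?s
          ((\<omega> * real k powr q + (1 - \<omega>) * ?s powr q) * ((1 + \<delta>1) / (1 - \<delta>2))
           * real (a * k) powr (- q))"
    using weighted_NSP_of_block_RIC[OF p \<omega> _ _ _ \<sigma>(2)] \<open>\<delta>2 < 1\<close> \<sigma>(1) \<open>0 < k\<close> \<open>0 < a\<close>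
    by (simp add: q_def \<delta>1_def \<delta>2_def)
  moreover have "(\<omega> * real k powr q + (1 - \<omega>) * ?s powr q) * real (a * k) powr (- q)
      = \<gamma> / real a powr q"
  proof -
    have "\<omega> * real k powr q + (1 - \<omega>) * ?s powr q = \<gamma> * real k powr q"
      using \<sigma>(1) by (simp add: \<gamma>_def powr_mult algebra_simps)
    then show ?thesis using \<open>0 < k\<close> by (simp add: powr_mult powr_minus field_simps)
  qed
  ultimately have "weighted_NSP m n d p \<omega> A k ?s ((1 + \<delta>1) / (1 - \<delta>2) * \<gamma> / real a powr q)"
    by (simp add: mult_ac)
  with C show ?thesis by blast
qed

theorem theorem3:
  fixes m n d k :: nat and p \<omega> \<rho> \<alpha> :: real
    and A :: "nat \<Rightarrow> nat \<Rightarrow> real" and x :: "nat \<Rightarrow> real"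
    and T0 Tt :: "nat set" and a :: nat
  assumes "0 < p" and "p \<le> 1" and "0 \<le> \<omega>" and "\<omega> \<le> 1"
    and "block_sparse n d k x" and "T0 = block_supp n d x"
    and "Tt \<subseteq> {..<n}"
    and "0 \<le> \<rho>" and "0 \<le> \<alpha>"
    and "real (card Tt) = \<rho> * real k"
    and "real (card (Tt \<inter> T0)) = \<alpha> * \<rho> * real k"
    and "real a \<ge> (1 - \<alpha>) * \<rho>" and "a > 1"
    and "block_p_RIC m n d p A (a * k)
           + real a powr (1 - p / 2) / (\<omega> + (1 - \<omega>) * ((1 + \<rho> - 2 * \<alpha> * \<rho>) * real k / real k) powr (1 - p / 2))
             * block_p_RIC m n d p A ((a + 1) * k)
         < real a powr (1 - p / 2) / (\<omega> + (1 - \<omega>) * ((1 + \<rho> - 2 * \<alpha> * \<rho>) * real k / real k) powr (1 - p / 2)) - 1"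
  shows "Tt \<in> Gamma_s n ((1 + \<rho> - 2 * \<alpha> * \<rho>) * real k) T0
         \<and> (\<exists>C < 1. weighted_NSP m n d p \<omega> A k ((1 + \<rho> - 2 * \<alpha> * \<rho>) * real k) C)"
proof -
  define \<sigma> where "\<sigma> = 1 + \<rho> - 2 * \<alpha> * \<rho>"
  have T0: "T0 \<subseteq> {..<n}" "card T0 \<le> k"
    using assms(5,6) by (auto simp: block_supp_def block_sparse_def)
  have card_Int: "card (Tt \<inter> T0) \<le> card T0" "card (Tt \<inter> T0) \<le> card Tt"
    using T0(1) assms(7) by (simp_all add: card_mono finite_subset)
  have s_eq: "\<sigma> * real k = real k + real (card Tt) - 2 * real (card (Tt \<inter> T0))"
    using assms(10,11) by (simp add: \<sigma>_def algebra_simps)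
  have "0 \<le> \<alpha> * \<rho> * real k" using assms(8,9) by simp
  then have s_bounds: "0 \<le> \<sigma> * real k" "\<sigma> * real k \<le> real (k + a * k)"
    using s_eq card_Int T0(2) mult_right_mono[OF assms(12), of "real k"]
    by (auto simp: \<sigma>_def algebra_simps)
  have "Tt \<in> Gamma_s n (\<sigma> * real k) T0"
    using mem_Gamma_s_iff_card[OF assms(7) T0(1)] s_eq T0(2) by (simp add: Int_commute)
  moreover have "\<exists>C < 1. weighted_NSP m n d p \<omega> A k (\<sigma> * real k) C"
  proof (cases "k = 0")
    case True
    then show ?thesis using weighted_NSP_zero_sparsity by (intro exI[of _ 0]) simp
  next
    case False
    with s_bounds(1) have "0 \<le> \<sigma>" by (simp add: zero_le_mult_iff)
    with False assms(14) show ?thesis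
      by (intro exists_weighted_NSP_lt_one[OF assms(1-4) _ _ _ s_bounds(2)])
        (use assms(13) in \<open>simp_all add: \<sigma>_def[symmetric] add.commute\<close>)
  qed
  ultimately show ?thesis by (simp add: \<sigma>_def)
qed

end
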